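(* Let $k\ge0$, $\ell=2k$, and let $G=(X\cup Y,E)$ be a bipartite graph without isolated vertices, with a linear order $<_X$ of $X$ listing $X$ as $x_1,\dots,x_{|X|}$. If $e=\{x_p,y\}$ and $f=\{x_q,y'\}$ are distinct edges with $p+\ell<q$, then in every 2-layer $k$-planar drawing $(<_X,<_Y)$ of $G$ (with this $<_X$) it holds that $y<_Yy'$ or $y=y'$.
   Context: A 2-layer drawing of a bipartite graph $G=(X\cup Y,E)$ ($X\cap Y=\emptyset$, $E\subseteq X\times Y$) is a pair $(<_X,<_Y)$ of strict linear orders on $X$ and $Y$. Edges $\{x,y\},\{x',y'\}$ with $x\ne x'\in X$, $y\ne y'\in Y$ cross if $x<_Xx'$ and $y'<_Yy$. The drawing is $k$-planar if every edge crosses at most $k$ edges. *)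

theory Defs
  imports Main
begin

definition strict_lin_ord :: "'a set \<Rightarrow> ('a \<times> 'a) set \<Rightarrow> bool" where
  "strict_lin_ord A r \<longleftrightarrow> strict_linear_order_on A r \<and> r \<subseteq> A \<times> A"

definition bipartite_graph :: "'a set \<Rightarrow> 'a set \<Rightarrow> ('a \<times> 'a) set \<Rightarrow> bool" where
  "bipartite_graph X Y E \<longleftrightarrow> X \<inter> Y = {} \<and> E \<subseteq> X \<times> Y"

definition no_isolated_vertices :: "'a set \<Rightarrow> 'a set \<Rightarrow> ('a \<times> 'a) set \<Rightarrow> bool" where
  "no_isolated_vertices X Y E \<longleftrightarrow>
     (\<forall>x\<in>X. \<exists>y. (x, y) \<in> E) \<and> (\<forall>y\<in>Y. \<exists>x. (x, y) \<in> E)"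

definition crosses :: "('a \<times> 'a) set \<Rightarrow> ('a \<times> 'a) set \<Rightarrow> 'a \<times> 'a \<Rightarrow> 'a \<times> 'a \<Rightarrow> bool" where
  "crosses RX RY e f \<longleftrightarrow>
     (case e of (x, y) \<Rightarrow> case f of (x', y') \<Rightarrow>
        x \<noteq> x' \<and> y \<noteq> y' \<and>
        (((x, x') \<in> RX \<and> (y', y) \<in> RY) \<or> ((x', x) \<in> RX \<and> (y, y') \<in> RY)))"

definition two_layer_drawing :: "'a set \<Rightarrow> 'a set \<Rightarrow> ('a \<times> 'a) set \<Rightarrow> ('a \<times> 'a) set \<Rightarrow> bool" where
  "two_layer_drawing X Y RX RY \<longleftrightarrow> strict_lin_ord X RX \<and> strict_lin_ord Y RY"

definition k_planar :: "nat \<Rightarrow> ('a \<times> 'a) set \<Rightarrow> ('a \<times> 'a) set \<Rightarrow> ('a \<times> 'a) set \<Rightarrow> bool" where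
  "k_planar k E RX RY \<longleftrightarrow> (\<forall>e\<in>E. card {f \<in> E. crosses RX RY e f} \<le> k)"

text \<open>Position of x in the listing x_1,...,x_|X| of X according to RX (0-based; the
  paper's index is this plus one).\<close>

definition pos :: "'a set \<Rightarrow> ('a \<times> 'a) set \<Rightarrow> 'a \<Rightarrow> nat" where
  "pos X RX x = card {x' \<in> X. (x', x) \<in> RX}"

end

theory Submission
  imports Defs
begin

text \<open>Suppose instead that y' <_Y y. As x_p <_X x_q, the edges e and f cross, and since
  q - p > 2k there are at least 2k vertices z strictly between x_p and x_q. Each such z has an
  edge {z, w}, which crosses e if w <_Y y and crosses f otherwise (then y' <_Y w). So at
  least 2k + 2 distinct edges cross e or f, while k-planarity allows at most 2k.\<close>

definition between :: "('a \<times> 'a) set \<Rightarrow> 'a \<Rightarrow> 'a \<Rightarrow> 'a set" where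
  "between R a b = {z. (a, z) \<in> R \<and> (z, b) \<in> R}"

lemma strict_lin_ordD:
  assumes "strict_lin_ord A r"
  shows "trans r" and "irrefl r" and "total_on A r" and "r \<subseteq> A \<times> A"
  using assms by (auto simp: strict_lin_ord_def strict_linear_order_on_def)

lemma between_subset:
  assumes "strict_lin_ord A r"
  shows "between r a b \<subseteq> A"
  using strict_lin_ordD(4)[OF assms] by (auto simp: between_def)

lemma pos_less_imp_rel:
  assumes "strict_lin_ord X RX" and "finite X" and "x \<in> X" and "x' \<in> X"
    and "pos X RX x < pos X RX x'"
  shows "(x, x') \<in> RX"
proof (rule ccontr)
  assume "(x, x') \<notin> RX"
  moreover have "x \<noteq> x'" using assms(5) by auto
  ultimately have "(x', x) \<in> RX"
    using strict_lin_ordD(3)[OF assms(1)] assms(3,4) by (auto simp: total_on_def)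
  then have "{u \<in> X. (u, x') \<in> RX} \<subseteq> {u \<in> X. (u, x) \<in> RX}"
    using strict_lin_ordD(1)[OF assms(1)] by (auto dest: transD)
  then have "pos X RX x' \<le> pos X RX x"
    unfolding pos_def using assms(2) by (simp add: card_mono)
  with assms(5) show False by simp
qed

lemma pos_le_Suc_pos_plus_card_between:
  assumes "strict_lin_ord X RX" and "finite X" and "x \<in> X"
  shows "pos X RX x' \<le> Suc (pos X RX x + card (between RX x x'))"
proof -
  have "{u \<in> X. (u, x') \<in> RX} \<subseteq> insert x ({u \<in> X. (u, x) \<in> RX} \<union> between RX x x')"
    using strict_lin_ordD(3)[OF assms(1)] assms(3) by (auto simp: total_on_def between_def)
  moreover have "finite (between RX x x')"
    using between_subset[OF assms(1)] assms(2) by (rule finite_subset)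
  ultimately have "pos X RX x' \<le> card (insert x ({u \<in> X. (u, x) \<in> RX} \<union> between RX x x'))"
    unfolding pos_def using assms(2) by (simp add: card_mono)
  also have "\<dots> \<le> Suc (card ({u \<in> X. (u, x) \<in> RX} \<union> between RX x x'))"
    using assms(2) \<open>finite (between RX x x')\<close> by (simp add: card_insert_if)
  also have "\<dots> \<le> Suc (pos X RX x + card (between RX x x'))"
    unfolding pos_def using card_Un_le by simp
  finally show ?thesis .
qed

lemma edge_between_crosses:
  assumes "two_layer_drawing X Y RX RY" and "z \<in> between RX x x'"
    and "(y', y) \<in> RY" and "w \<in> Y"
  shows "crosses RX RY (x, y) (z, w) \<or> crosses RX RY (x', y') (z, w)"
proof -
  from assms(1) have "strict_lin_ord X RX" and RY: "strict_lin_ord Y RY"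
    by (simp_all add: two_layer_drawing_def)
  then have "z \<noteq> x" and "z \<noteq> x'"
    using assms(2) strict_lin_ordD(2) by (auto simp: between_def irrefl_def)
  have "y \<in> Y" using assms(3) strict_lin_ordD(4)[OF RY] by auto
  consider "(w, y) \<in> RY" | "w = y \<or> (y, w) \<in> RY"
    using strict_lin_ordD(3)[OF RY] \<open>w \<in> Y\<close> \<open>y \<in> Y\<close> by (auto simp: total_on_def)
  then show ?thesis
  proof cases
    case 1
    then have "w \<noteq> y" using strict_lin_ordD(2)[OF RY] by (auto simp: irrefl_def)
    with 1 show ?thesis using \<open>z \<noteq> x\<close> assms(2) by (simp add: crosses_def between_def)
  next
    case 2
    then have "(y', w) \<in> RY"
      using assms(3) strict_lin_ordD(1)[OF RY] by (auto dest: transD)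
    moreover then have "w \<noteq> y'" using strict_lin_ordD(2)[OF RY] by (auto simp: irrefl_def)
    ultimately show ?thesis using \<open>z \<noteq> x'\<close> assms(2) by (simp add: crosses_def between_def)
  qed
qed

lemma k_planar_card_crossing_either_le:
  assumes "k_planar k E RX RY" and "e \<in> E" and "f \<in> E"
  shows "card {g \<in> E. crosses RX RY e g \<or> crosses RX RY f g} \<le> 2 * k"
proof -
  have "{g \<in> E. crosses RX RY e g \<or> crosses RX RY f g}
      = {g \<in> E. crosses RX RY e g} \<union> {g \<in> E. crosses RX RY f g}"
    by auto
  also have "card \<dots> \<le> card {g \<in> E. crosses RX RY e g} + card {g \<in> E. crosses RX RY f g}"
    by (rule card_Un_le)
  also have "\<dots> \<le> k + k"
    using assms unfolding k_planar_def by (blast intro: add_mono)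
  finally show ?thesis by simp
qed

lemma card_between_le_if_crossing:
  assumes "finite E" and "bipartite_graph X Y E" and "no_isolated_vertices X Y E"
    and "two_layer_drawing X Y RX RY" and "k_planar k E RX RY"
    and "(x, y) \<in> E" and "(x', y') \<in> E" and "(x, x') \<in> RX" and "(y', y) \<in> RY"
  shows "card (between RX x x') + 2 \<le> 2 * k"
proof -
  let ?C = "{g \<in> E. crosses RX RY (x, y) g \<or> crosses RX RY (x', y') g}"
  let ?D = "{(x, y), (x', y')}"
  have RX: "strict_lin_ord X RX" and RY: "strict_lin_ord Y RY"
    using assms(4) by (simp_all add: two_layer_drawing_def)
  have "\<forall>z \<in> between RX x x'. \<exists>w. (z, w) \<in> E"
    using between_subset[OF RX] assms(3) unfolding no_isolated_vertices_def by blast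
  then obtain w where w: "\<And>z. z \<in> between RX x x' \<Longrightarrow> (z, w z) \<in> E" by metis
  have "x \<noteq> x'" "x \<notin> between RX x x'" "x' \<notin> between RX x x'" "y \<noteq> y'"
    using assms(8,9) strict_lin_ordD(2)[OF RX] strict_lin_ordD(2)[OF RY]
    by (auto simp: between_def irrefl_def)
  have "(z, w z) \<in> ?C - ?D" if z: "z \<in> between RX x x'" for z
  proof -
    have "w z \<in> Y" using w[OF z] assms(2) by (auto simp: bipartite_graph_def)
    with z have "crosses RX RY (x, y) (z, w z) \<or> crosses RX RY (x', y') (z, w z)"
      using edge_between_crosses[OF assms(4) _ assms(9)] by blast
    moreover have "z \<noteq> x" "z \<noteq> x'"
      using z \<open>x \<notin> between RX x x'\<close> \<open>x' \<notin> between RX x x'\<close> by auto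
    ultimately show ?thesis using w[OF z] by auto
  qed
  then have "(\<lambda>z. (z, w z)) ` between RX x x' \<subseteq> ?C - ?D"
    by blast
  then have "card (between RX x x') \<le> card (?C - ?D)"
    using assms(1) by (intro card_inj_on_le) (auto simp: inj_on_def)
  moreover have crossing_pair: "?D \<subseteq> ?C"
    using assms(6-9) \<open>x \<noteq> x'\<close> \<open>y \<noteq> y'\<close> by (auto simp: crosses_def)
  then have "card (?C - ?D) = card ?C - 2"
    using \<open>x \<noteq> x'\<close> by (simp add: card_Diff_subset)
  moreover have "2 \<le> card ?C"
    using card_mono[OF _ crossing_pair] assms(1) \<open>x \<noteq> x'\<close> by simp
  ultimately show ?thesis
    using k_planar_card_crossing_either_le[OF assms(5-7)] by linarith
qed

theorem lemma3p4:
  fixes k :: nat and X Y :: "'a set" and E RX RY :: "('a \<times> 'a) set"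
    and x y x' y' :: 'a
  assumes "finite X" and "finite Y"
    and "bipartite_graph X Y E"
    and "no_isolated_vertices X Y E"
    and "two_layer_drawing X Y RX RY"
    and "k_planar k E RX RY"
    and "(x, y) \<in> E" and "(x', y') \<in> E" and "(x, y) \<noteq> (x', y')"
    and "pos X RX x + 2 * k < pos X RX x'"
  shows "(y, y') \<in> RY \<or> y = y'"
proof (rule ccontr)
  assume "\<not> ((y, y') \<in> RY \<or> y = y')"
  have RX: "strict_lin_ord X RX" and RY: "strict_lin_ord Y RY"
    using assms(5) by (simp_all add: two_layer_drawing_def)
  have "E \<subseteq> X \<times> Y" using assms(3) by (simp add: bipartite_graph_def)
  then have "finite E" and "x \<in> X" "x' \<in> X" "y \<in> Y" "y' \<in> Y"
    using assms(1,2,7,8) finite_subset by auto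
  then have "(y', y) \<in> RY"
    using \<open>\<not> ((y, y') \<in> RY \<or> y = y')\<close> strict_lin_ordD(3)[OF RY] by (auto simp: total_on_def)
  moreover have "(x, x') \<in> RX"
    using pos_less_imp_rel[OF RX assms(1) \<open>x \<in> X\<close> \<open>x' \<in> X\<close>] assms(10) by simp
  ultimately have "card (between RX x x') + 2 \<le> 2 * k"
    using card_between_le_if_crossing[OF \<open>finite E\<close> assms(3-8)] by blast
  then show False
    using pos_le_Suc_pos_plus_card_between[OF RX assms(1) \<open>x \<in> X\<close>, of x'] assms(10) by linarith
qed

end
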